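(* Consider the load-balancing system described in the context under any policy in $\Pi$, with $S$ the stationary state, and $\mu_{\max}=\max\{\mu_1,\mu_2\}$. Then $$\mathbb P\left(S_{1,2}\le \frac{p}{\mu_2}+\frac{\log N}{2\sqrt N}\right)\ge 1-e^{-\frac{\mu_1\mu_2\log^2N}{40\mu_{\max}}}.$$
   Context: System: $N$ identical servers. Jobs arrive according to a Poisson process of rate $\lambda N$ with $\lambda=1-N^{-\alpha}$, $0<\alpha<0.5$. Service times are Coxian-2 with parameters $(\mu_1,\mu_2,p)$, $\mu_1,\mu_2>0$, $0\le p<1$: a job in service completes phase 1 at rate $\mu_1$; then with probability $1-p$ it leaves, and with probability $p$ it enters phase 2, completed at rate $\mu_2$. It is assumed that $\frac{1}{\mu_1}+\frac{p}{\mu_2}=1$. Each server holds at most $b$ jobs (one in service, $b-1$ in buffer); jobs routed to a full server are discarded. $S_{i,m}(t)$ is the fraction of servers with at least $i$ jobs whose job in service is in phase $m$, $S_i=S_{i,1}+S_{i,2}$; the state space is $\mathcal S^{(N)}=\{s\in\mathbb R^{b\times2}: 1\ge s_{1,m}\ge\cdots\ge s_{b,m}\ge0,\ s_{1,1}+s_{1,2}\le1,\ Ns_{i,m}\in\mathbb N\}$, with $s_i=s_{i,1}+s_{i,2}$. Policies dispatch based on the state and make the CTMC irreducible; $S$ denotes the stationary state. $A_1(s)$ is the probability that an arriving job is routed to a busy server in state $s$. $\Pi$ is the set of policies with $A_1(s)\le 1/\sqrt N$ for all $s\in\mathcal S^{(N)}$ with $s_1\le\lambda+\frac{1+\mu_1+\mu_2}{\min\{(1-p)\mu_1,\mu_2\}}\frac{\log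 N}{\sqrt N}$. *)

theory Defs
  imports Complex_Main
begin

text \<open>Aggregate state: s i m = fraction of servers with at least i jobs whose job in
  service is in phase m (indices i in 1..b, m in {1,2}; all other entries are 0).\<close>
type_synonym lbstate = "nat \<Rightarrow> nat \<Rightarrow> real"

definition state_space :: "nat \<Rightarrow> nat \<Rightarrow> lbstate set" where
  "state_space N b = {s.
     (\<forall>i m. (i < 1 \<or> b < i \<or> m \<notin> {1,2}) \<longrightarrow> s i m = 0) \<and>
     (\<forall>m\<in>{1,2::nat}. s 1 m \<le> 1 \<and> 0 \<le> s b m \<and> (\<forall>i\<in>{1..<b}. s (Suc i) m \<le> s i m)) \<and>
     s 1 1 + s 1 2 \<le> 1 \<and>
     (\<forall>i\<in>{1..b}. \<forall>m\<in>{1,2::nat}. real N * s i m \<in> \<nat>)}"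

text \<open>Dispatch classes: (0,1) = an idle server; (i,m) with 1 \<le> i \<le> b = a server with exactly
  i jobs whose job in service is in phase m.\<close>
definition busy_classes :: "nat \<Rightarrow> (nat \<times> nat) set" where
  "busy_classes b = {1..b} \<times> {1,2}"

definition classes :: "nat \<Rightarrow> (nat \<times> nat) set" where
  "classes b = insert (0,1) (busy_classes b)"

definition class_frac :: "lbstate \<Rightarrow> nat \<Rightarrow> nat \<Rightarrow> real" where
  "class_frac s i m = (if i = 0 then 1 - (s 1 1 + s 1 2) else s i m - s (Suc i) m)"

text \<open>A policy: route s i m = probability that a job arriving in state s is sent to a server
  of class (i,m).\<close>
type_synonym policy = "lbstate \<Rightarrow> nat \<Rightarrow> nat \<Rightarrow> real"

definition valid_policy :: "nat \<Rightarrow> nat \<Rightarrow> policy \<Rightarrow> bool" where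
  "valid_policy N b route \<longleftrightarrow> (\<forall>s\<in>state_space N b.
      (\<forall>(i,m)\<in>classes b. 0 \<le> route s i m \<and> (0 < route s i m \<longrightarrow> 0 < class_frac s i m)) \<and>
      (\<Sum>(i,m)\<in>classes b. route s i m) = 1)"

definition A1 :: "nat \<Rightarrow> policy \<Rightarrow> lbstate \<Rightarrow> real" where
  "A1 b route s = (\<Sum>(i,m)\<in>busy_classes b. route s i m)"

definition arr_target :: "nat \<Rightarrow> nat \<Rightarrow> lbstate \<Rightarrow> nat \<Rightarrow> nat \<Rightarrow> lbstate" where
  "arr_target N b s i m =
     (if i = 0 then (\<lambda>j k. if j = 1 \<and> k = 1 then s j k + 1 / real N else s j k)
      else if i < b then (\<lambda>j k. if j = Suc i \<and> k = m then s j k + 1 / real N else s j k)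
      else s)"

definition phase_change_target :: "nat \<Rightarrow> lbstate \<Rightarrow> nat \<Rightarrow> lbstate" where
  "phase_change_target N s i = (\<lambda>j k.
     if 1 \<le> j \<and> j \<le> i then
       (if k = 1 then s j k - 1 / real N else if k = 2 then s j k + 1 / real N else s j k)
     else s j k)"

definition dep1_target :: "nat \<Rightarrow> lbstate \<Rightarrow> nat \<Rightarrow> lbstate" where
  "dep1_target N s i = (\<lambda>j k. if j = i \<and> k = 1 then s j k - 1 / real N else s j k)"

definition dep2_target :: "nat \<Rightarrow> lbstate \<Rightarrow> nat \<Rightarrow> lbstate" where
  "dep2_target N s i = (\<lambda>j k.
     if j = i \<and> k = 2 then s j k - 1 / real N
     else if 1 \<le> j \<and> j < i then
       (if k = 2 then s j k - 1 / real N else if k = 1 then s j k + 1 / real N else s j k)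
     else s j k)"

definition trans_rate :: "nat \<Rightarrow> nat \<Rightarrow> real \<Rightarrow> real \<Rightarrow> real \<Rightarrow> real \<Rightarrow> policy
    \<Rightarrow> lbstate \<Rightarrow> lbstate \<Rightarrow> real" where
  "trans_rate N b lam mu1 mu2 p route s s' =
     (\<Sum>(i,m)\<in>classes b. if arr_target N b s i m = s' then lam * real N * route s i m else 0)
   + (\<Sum>i\<in>{1..b}.
        (if phase_change_target N s i = s' then mu1 * p * real N * class_frac s i 1 else 0)
      + (if dep1_target N s i = s' then mu1 * (1 - p) * real N * class_frac s i 1 else 0)
      + (if dep2_target N s i = s' then mu2 * real N * class_frac s i 2 else 0))"

definition gen :: "nat \<Rightarrow> nat \<Rightarrow> real \<Rightarrow> real \<Rightarrow> real \<Rightarrow> real \<Rightarrow> policy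
    \<Rightarrow> lbstate \<Rightarrow> lbstate \<Rightarrow> real" where
  "gen N b lam mu1 mu2 p route s s' =
     (if s = s' then 0 else trans_rate N b lam mu1 mu2 p route s s')"

definition irreducible_chain :: "nat \<Rightarrow> nat \<Rightarrow> real \<Rightarrow> real \<Rightarrow> real \<Rightarrow> real \<Rightarrow> policy \<Rightarrow> bool" where
  "irreducible_chain N b lam mu1 mu2 p route \<longleftrightarrow>
     (\<forall>s\<in>state_space N b. \<forall>s'\<in>state_space N b.
        (s, s') \<in> {(x, y). x \<in> state_space N b \<and> y \<in> state_space N b \<and>
                          0 < gen N b lam mu1 mu2 p route x y}\<^sup>*)"

definition stationary_dist :: "nat \<Rightarrow> nat \<Rightarrow> real \<Rightarrow> real \<Rightarrow> real \<Rightarrow> real \<Rightarrow> policy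
    \<Rightarrow> (lbstate \<Rightarrow> real) \<Rightarrow> bool" where
  "stationary_dist N b lam mu1 mu2 p route \<pi> \<longleftrightarrow>
     (\<forall>s\<in>state_space N b. 0 \<le> \<pi> s) \<and>
     (\<Sum>s\<in>state_space N b. \<pi> s) = 1 \<and>
     (\<forall>s'\<in>state_space N b.
        (\<Sum>s\<in>state_space N b. \<pi> s * gen N b lam mu1 mu2 p route s s')
        = \<pi> s' * (\<Sum>s\<in>state_space N b. gen N b lam mu1 mu2 p route s' s))"

definition in_Pi :: "nat \<Rightarrow> nat \<Rightarrow> real \<Rightarrow> real \<Rightarrow> real \<Rightarrow> real \<Rightarrow> policy \<Rightarrow> bool" where
  "in_Pi N b lam mu1 mu2 p route \<longleftrightarrow>
     (\<forall>s\<in>state_space N b.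
        s 1 1 + s 1 2 \<le> lam + (1 + mu1 + mu2) / min ((1 - p) * mu1) mu2 * (ln (real N) / sqrt (real N))
        \<longrightarrow> A1 b route s \<le> 1 / sqrt (real N))"

end

theory Submission
  imports Defs
begin

text \<open>Let K = N S_{1,2} be the number of servers whose job in service is in phase 2. K increases
  only through phase changes, one at a time and at total rate at most mu1 p (N - K), because at
  most N - K servers serve a phase-1 job; phase-2 completions decrease it at total rate mu2 K.
  Balancing the stationary probability flow across the cut {K <= k} therefore gives
  mu2 (k + 1) P(K = k + 1) <= mu1 p (N - k) P(K = k), whatever the dispatching policy. So the law
  of K is dominated in likelihood ratio, hence in its upper tails, by the binomial law with N
  trials and success probability mu1 p / (mu1 p + mu2) = p / mu2, and a Chernoff bound with
  theta = log N / (4 sqrt N) gives the estimate.\<close>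

lemma Nats_less_imp_add_one_le:
  fixes x y :: "'a :: linordered_idom"
  shows "x \<in> \<nat> \<Longrightarrow> y \<in> \<nat> \<Longrightarrow> y < x \<Longrightarrow> y + 1 \<le> x"
  by (elim Nats_cases) (metis Suc_leI of_nat_Suc of_nat_le_iff of_nat_less_iff add.commute)

lemma mult_add_inverse_Nats:
  assumes "0 < N" "real N * x \<in> \<nat>"
  shows "real N * (x + 1 / real N) \<in> \<nat>"
proof -
  have "real N * (x + 1 / real N) = real N * x + 1" using assms(1) by (simp add: field_simps)
  then show ?thesis using assms(2) by simp
qed

lemma mult_diff_inverse_Nats:
  assumes "0 < N" "real N * x \<in> \<nat>" "1 / real N \<le> x"
  shows "real N * (x - 1 / real N) \<in> \<nat>"
proof -
  have "real N * (x - 1 / real N) = real N * x - 1" using assms(1) by (simp add: field_simps)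
  moreover have "1 \<le> real N * x" using assms(1,3) by (simp add: field_simps)
  ultimately show ?thesis using assms(2) by simp
qed

lemma balance_cut_flow:
  fixes \<pi> :: "'a \<Rightarrow> real"
  assumes "finite S" "A \<subseteq> S"
    and bal: "\<forall>s'\<in>S. (\<Sum>s\<in>S. \<pi> s * g s s') = \<pi> s' * (\<Sum>s\<in>S. g s' s)"
  shows "(\<Sum>s\<in>S-A. \<pi> s * (\<Sum>s'\<in>A. g s s')) = (\<Sum>s'\<in>A. \<pi> s' * (\<Sum>s\<in>S-A. g s' s))"
proof -
  have fA: "finite A" using assms finite_subset by blast
  have fB: "finite (S-A)" using assms by blast
  have S: "S = A \<union> (S-A)" using assms by blast
  have "(\<Sum>s'\<in>A. \<Sum>s\<in>S. \<pi> s * g s s') = (\<Sum>s'\<in>A. \<pi> s' * (\<Sum>s\<in>S. g s' s))"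
    using bal assms(2) by (intro sum.cong) auto
  moreover have "(\<Sum>s'\<in>A. \<Sum>s\<in>S. \<pi> s * g s s')
      = (\<Sum>s'\<in>A. \<Sum>s\<in>A. \<pi> s * g s s') + (\<Sum>s'\<in>A. \<Sum>s\<in>S-A. \<pi> s * g s s')"
    by (subst S, subst sum.union_disjoint) (use fA fB in \<open>auto simp: sum.distrib\<close>)
  moreover have "(\<Sum>s'\<in>A. \<pi> s' * (\<Sum>s\<in>S. g s' s))
      = (\<Sum>s'\<in>A. \<pi> s' * (\<Sum>s\<in>A. g s' s)) + (\<Sum>s'\<in>A. \<pi> s' * (\<Sum>s\<in>S-A. g s' s))"
    by (subst S, subst sum.union_disjoint) (use fA fB in \<open>auto simp: sum.distrib distrib_left\<close>)
  moreover have "(\<Sum>s'\<in>A. \<Sum>s\<in>A. \<pi> s * g s s') = (\<Sum>s'\<in>A. \<pi> s' * (\<Sum>s\<in>A. g s' s))"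
    by (subst sum.swap) (simp add: sum_distrib_left)
  moreover have "(\<Sum>s'\<in>A. \<Sum>s\<in>S-A. \<pi> s * g s s') = (\<Sum>s\<in>S-A. \<pi> s * (\<Sum>s'\<in>A. g s s'))"
    by (subst sum.swap) (simp add: sum_distrib_left)
  ultimately show ?thesis by linarith
qed

definition binomial_weight :: "nat \<Rightarrow> real \<Rightarrow> real \<Rightarrow> nat \<Rightarrow> real" where
  "binomial_weight n a c k = real (n choose k) * a ^ k * c ^ (n - k)"

lemma binomial_weight_nonneg: "0 \<le> a \<Longrightarrow> 0 \<le> c \<Longrightarrow> 0 \<le> binomial_weight n a c k"
  unfolding binomial_weight_def by simp

lemma sum_binomial_weight: "(\<Sum>k\<le>n. binomial_weight n a c k) = (a + c) ^ n"
  unfolding binomial_weight_def binomial_ring by (simp add: mult.commute mult.left_commute)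

lemma binomial_weight_Suc:
  assumes "k < n"
  shows "c * real (Suc k) * binomial_weight n a c (Suc k) = a * (real n - real k) * binomial_weight n a c k"
proof -
  have "Suc k * (n choose Suc k) = (n - k) * (n choose k)"
    using binomial_absorption[of k n] binomial_absorb_comp[of n k] by simp
  then have choose: "real (Suc k) * real (n choose Suc k) = (real n - real k) * real (n choose k)"
    using assms by (metis of_nat_diff of_nat_mult less_imp_le)
  have power: "c ^ (n - k) = c * c ^ (n - Suc k)"
    using assms by (metis Suc_diff_Suc power_Suc)
  have "c * real (Suc k) * binomial_weight n a c (Suc k)
      = (real (Suc k) * real (n choose Suc k)) * a ^ Suc k * c ^ (n - Suc k) * c"
    unfolding binomial_weight_def by (simp add: algebra_simps)
  also have "\<dots> = a * (real n - real k) * binomial_weight n a c k"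
    unfolding choose binomial_weight_def power by (simp add: algebra_simps)
  finally show ?thesis .
qed

lemma likelihood_ratio_le_binomial_weight:
  fixes P :: "nat \<Rightarrow> real"
  assumes rec: "\<And>k. c * real (Suc k) * P (Suc k) \<le> a * (real n - real k) * P k"
    and P0: "\<And>k. n < k \<Longrightarrow> P k = 0" and P_nonneg: "\<And>k. 0 \<le> P k"
    and a: "0 \<le> a" and c: "0 < c" and "i \<le> j"
  shows "P j * binomial_weight n a c i \<le> P i * binomial_weight n a c j"
  using \<open>i \<le> j\<close>
proof (induction j rule: dec_induct)
  case (step j)
  let ?w = "binomial_weight n a c"
  show ?case
  proof (cases "j < n")
    case True
    have "c * real (Suc j) * (P (Suc j) * ?w i) = (c * real (Suc j) * P (Suc j)) * ?w i" by simp
    also have "\<dots> \<le> (a * (real n - real j) * P j) * ?w i"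
      using rec[of j] binomial_weight_nonneg[OF a less_imp_le[OF c]] by (rule mult_right_mono)
    also have "\<dots> = (a * (real n - real j)) * (P j * ?w i)" by simp
    also have "\<dots> \<le> (a * (real n - real j)) * (P i * ?w j)"
      using step.IH a True by (intro mult_left_mono) auto
    also have "\<dots> = c * real (Suc j) * (P i * ?w (Suc j))"
      using binomial_weight_Suc[OF True, of c a] by simp
    finally show ?thesis using c by (simp del: of_nat_Suc)
  next
    case False
    then show ?thesis
      using P0[of "Suc j"] P_nonneg binomial_weight_nonneg[OF a less_imp_le[OF c]] by simp
  qed
qed simp

lemma tail_le_binomial_tail:
  fixes P :: "nat \<Rightarrow> real" and T :: real
  assumes rec: "\<And>k. c * real (Suc k) * P (Suc k) \<le> a * (real n - real k) * P k"
    and P0: "\<And>k. n < k \<Longrightarrow> P k = 0" and P_nonneg: "\<And>k. 0 \<le> P k"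
    and a: "0 \<le> a" and c: "0 < c" and total: "(\<Sum>k\<le>n. P k) = 1"
  shows "(\<Sum>k | k \<le> n \<and> T < real k. P k) * (a + c) ^ n
      \<le> (\<Sum>k | k \<le> n \<and> T < real k. binomial_weight n a c k)"
proof -
  let ?H = "{k. k \<le> n \<and> T < real k}" and ?L = "{k. k \<le> n \<and> \<not> T < real k}"
  let ?w = "binomial_weight n a c"
  have split: "(\<Sum>k\<le>n. f k) = (\<Sum>k\<in>?H. f k) + (\<Sum>k\<in>?L. f k)" for f :: "nat \<Rightarrow> real"
    by (subst sum.union_disjoint[symmetric]) (auto intro: sum.cong)
  have "(\<Sum>j\<in>?H. \<Sum>i\<in>?L. P j * ?w i) \<le> (\<Sum>j\<in>?H. \<Sum>i\<in>?L. P i * ?w j)"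
    using likelihood_ratio_le_binomial_weight[OF rec P0 P_nonneg a c] by (intro sum_mono) auto
  then have "(\<Sum>j\<in>?H. P j) * (\<Sum>i\<in>?L. ?w i) \<le> (\<Sum>i\<in>?L. P i) * (\<Sum>j\<in>?H. ?w j)"
    by (simp add: sum_product sum.swap[of _ ?H ?L] mult.commute)
  moreover have "(\<Sum>i\<in>?L. P i) = 1 - (\<Sum>j\<in>?H. P j)" using split[of P] total by simp
  moreover have "(\<Sum>i\<in>?L. ?w i) = (a + c) ^ n - (\<Sum>j\<in>?H. ?w j)"
    using split[of ?w] sum_binomial_weight[of n a c] by simp
  ultimately show ?thesis by (simp add: algebra_simps)
qed

lemma binomial_tail_chernoff:
  fixes T \<theta> :: real
  assumes a: "0 \<le> a" and c: "0 \<le> c" and \<theta>: "0 \<le> \<theta>"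
  shows "(\<Sum>k | k \<le> n \<and> T < real k. binomial_weight n a c k) \<le> exp (- \<theta> * T) * (a * exp \<theta> + c) ^ n"
proof -
  let ?w = "binomial_weight n a c"
  have "(\<Sum>k | k \<le> n \<and> T < real k. ?w k) \<le> (\<Sum>k | k \<le> n \<and> T < real k. ?w k * exp (\<theta> * (real k - T)))"
  proof (rule sum_mono)
    fix k assume "k \<in> {k. k \<le> n \<and> T < real k}"
    then have "1 \<le> exp (\<theta> * (real k - T))" using \<theta> by simp
    then show "?w k \<le> ?w k * exp (\<theta> * (real k - T))"
      using binomial_weight_nonneg[OF a c] mult_left_mono[of 1] by fastforce
  qed
  also have "\<dots> \<le> (\<Sum>k\<le>n. ?w k * exp (\<theta> * (real k - T)))"
    using binomial_weight_nonneg[OF a c] by (intro sum_mono2) auto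
  also have "\<dots> = exp (- \<theta> * T) * (\<Sum>k\<le>n. real (n choose k) * (a * exp \<theta>) ^ k * c ^ (n - k))"
    unfolding sum_distrib_left binomial_weight_def
    by (intro sum.cong refl)
      (simp add: power_mult_distrib exp_of_nat_mult[symmetric] exp_add[symmetric] algebra_simps)
  also have "\<dots> = exp (- \<theta> * T) * (a * exp \<theta> + c) ^ n"
    by (simp add: binomial_ring)
  finally show ?thesis .
qed

lemma tail_chernoff:
  fixes P :: "nat \<Rightarrow> real" and T \<theta> :: real
  assumes rec: "\<And>k. c * real (Suc k) * P (Suc k) \<le> a * (real n - real k) * P k"
    and P0: "\<And>k. n < k \<Longrightarrow> P k = 0" and P_nonneg: "\<And>k. 0 \<le> P k"
    and a: "0 \<le> a" and c: "0 < c" and total: "(\<Sum>k\<le>n. P k) = 1" and \<theta>: "0 \<le> \<theta>"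
  shows "(\<Sum>k | k \<le> n \<and> T < real k. P k) \<le> exp (- \<theta> * T) * (1 + a / (a + c) * (exp \<theta> - 1)) ^ n"
proof -
  have ac: "0 < a + c" using a c by simp
  have "(\<Sum>k | k \<le> n \<and> T < real k. P k) * (a + c) ^ n \<le> exp (- \<theta> * T) * (a * exp \<theta> + c) ^ n"
    using tail_le_binomial_tail[OF rec P0 P_nonneg a c total]
      binomial_tail_chernoff[OF a less_imp_le[OF c] \<theta>] by (rule order_trans)
  moreover have "a * exp \<theta> + c = (a + c) * (1 + a / (a + c) * (exp \<theta> - 1))"
    using ac by (simp add: field_simps)
  ultimately show ?thesis
    using ac by (simp add: power_mult_distrib mult.assoc[symmetric])
qed

lemma chernoff_exponent_le:
  fixes n :: nat and q :: real
  assumes n: "1 \<le> n" and q: "0 \<le> q" "q \<le> 1"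
  defines "L \<equiv> ln (real n)"
  defines "\<theta> \<equiv> L / (4 * sqrt (real n))"
  shows "exp (- \<theta> * (real n * (q + L / (2 * sqrt (real n))))) * (1 + q * (exp \<theta> - 1)) ^ n
         \<le> exp (- (L\<^sup>2 / 16))"
proof -
  have sqrt_pos: "0 < sqrt (real n)" using n by simp
  have sqrt_sq: "sqrt (real n) * sqrt (real n) = real n" by simp
  have \<theta>_nonneg: "0 \<le> \<theta>" unfolding \<theta>_def L_def using n by simp
  have "L = 2 * ln (sqrt (real n))" unfolding L_def using n by (simp add: ln_sqrt)
  also have "\<dots> \<le> 2 * (sqrt (real n) - 1)" using ln_le_minus_one[OF sqrt_pos] by simp
  finally have "L \<le> 4 * sqrt (real n)" using sqrt_pos by (smt (verit))
  then have "\<theta> \<le> 1" unfolding \<theta>_def using sqrt_pos by simp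
  then have "exp \<theta> - 1 \<le> \<theta> + \<theta>\<^sup>2" using exp_bound[OF \<theta>_nonneg] by simp
  then have "q * (exp \<theta> - 1) \<le> q * \<theta> + \<theta>\<^sup>2"
    using q \<theta>_nonneg mult_left_mono[of "exp \<theta> - 1" "\<theta> + \<theta>\<^sup>2" q] mult_left_le_one_le[of "\<theta>\<^sup>2" q]
    by (simp add: distrib_left)
  then have "real n * (q * (exp \<theta> - 1)) \<le> real n * (q * \<theta>) + real n * \<theta>\<^sup>2"
    by (simp add: distrib_left[symmetric] mult_left_mono)
  moreover have "\<theta> * (real n * (L / (2 * sqrt (real n)))) = L\<^sup>2 / 8"
    unfolding \<theta>_def using sqrt_pos sqrt_sq by (simp add: field_simps power2_eq_square)
  moreover have "real n * \<theta>\<^sup>2 = L\<^sup>2 / 16"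
    unfolding \<theta>_def using sqrt_pos sqrt_sq by (simp add: field_simps power2_eq_square)
  ultimately have exponent: "- \<theta> * (real n * (q + L / (2 * sqrt (real n)))) + real n * (q * (exp \<theta> - 1))
      \<le> - (L\<^sup>2 / 16)"
    by (simp add: algebra_simps)
  have "(1 + q * (exp \<theta> - 1)) ^ n \<le> exp (q * (exp \<theta> - 1)) ^ n"
    using q \<theta>_nonneg by (intro power_mono) auto
  also have "\<dots> = exp (real n * (q * (exp \<theta> - 1)))" by (simp add: exp_of_nat_mult)
  finally have "exp (- \<theta> * (real n * (q + L / (2 * sqrt (real n))))) * (1 + q * (exp \<theta> - 1)) ^ n
      \<le> exp (- \<theta> * (real n * (q + L / (2 * sqrt (real n))))) * exp (real n * (q * (exp \<theta> - 1)))"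
    by (intro mult_left_mono) auto
  also have "\<dots> \<le> exp (- (L\<^sup>2 / 16))" using exponent by (simp flip: exp_add)
  finally show ?thesis .
qed

lemma coxian_rate_ratio_le:
  fixes mu1 mu2 p y :: real
  assumes "0 < mu1" "0 < mu2" "p < 1" "1 / mu1 + p / mu2 = 1" "0 \<le> y"
  shows "mu1 * mu2 * y / (40 * max mu1 mu2) \<le> y / 16"
proof -
  have "1 < 1 / mu1 + 1 / mu2"
    using assms divide_strict_right_mono[of p 1 mu2] by simp
  then have "min mu1 mu2 \<le> 2"
  proof (rule contrapos_pp)
    assume "\<not> min mu1 mu2 \<le> 2"
    then have "1 / mu1 < 1 / 2" "1 / mu2 < 1 / 2" by (auto simp: field_simps)
    then show "\<not> 1 < 1 / mu1 + 1 / mu2" by simp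
  qed
  moreover have "mu1 * mu2 = min mu1 mu2 * max mu1 mu2" by (simp add: min_def max_def)
  ultimately have "mu1 * mu2 * y \<le> 2 * max mu1 mu2 * y"
    using assms(1,2,5) by (simp add: mult_right_mono)
  then have "mu1 * mu2 * y / (40 * max mu1 mu2) \<le> 2 * max mu1 mu2 * y / (40 * max mu1 mu2)"
    using assms(1) by (intro divide_right_mono) auto
  also have "\<dots> \<le> y / 16" using assms(1,5) by simp
  finally show ?thesis .
qed

lemma
  assumes "s \<in> state_space N b"
  shows state_space_zero: "i < 1 \<or> b < i \<or> m \<notin> {1,2} \<Longrightarrow> s i m = 0"
    and state_space_first_le_1: "m \<in> {1,2} \<Longrightarrow> s 1 m \<le> 1"
    and state_space_last_nonneg: "m \<in> {1,2} \<Longrightarrow> 0 \<le> s b m"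
    and state_space_Suc_le: "m \<in> {1,2} \<Longrightarrow> 1 \<le> i \<Longrightarrow> i < b \<Longrightarrow> s (Suc i) m \<le> s i m"
    and state_space_busy_le_1: "s 1 1 + s 1 2 \<le> 1"
    and state_space_Nats_busy: "1 \<le> i \<Longrightarrow> i \<le> b \<Longrightarrow> m \<in> {1,2} \<Longrightarrow> real N * s i m \<in> \<nat>"
  using assms unfolding state_space_def by auto

lemma state_space_antimono:
  assumes s: "s \<in> state_space N b" and m: "m \<in> {1,2}" and "1 \<le> i" "i \<le> j" "j \<le> b"
  shows "s j m \<le> s i m"
  using assms(4,5)
proof (induction j rule: dec_induct)
  case (step j)
  then show ?case using state_space_Suc_le[OF s m, of j] \<open>1 \<le> i\<close> by auto
qed simp

lemma state_space_nonneg: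
  assumes s: "s \<in> state_space N b"
  shows "0 \<le> s i m"
proof (cases "1 \<le> i \<and> i \<le> b \<and> m \<in> {1,2}")
  case True
  then show ?thesis using state_space_antimono[OF s, of m i b] state_space_last_nonneg[OF s, of m] by auto
qed (use state_space_zero[OF s] in auto)

lemma state_space_Nats:
  assumes s: "s \<in> state_space N b"
  shows "real N * s i m \<in> \<nat>"
  using state_space_Nats_busy[OF s] state_space_zero[OF s, of i m]
  by (cases "1 \<le> i \<and> i \<le> b \<and> m \<in> {1,2}") auto

lemma class_frac_nonneg:
  assumes s: "s \<in> state_space N b" and "1 \<le> i" "m \<in> {1,2}"
  shows "0 \<le> class_frac s i m"
proof (cases "i < b")
  case True
  then show ?thesis using state_space_Suc_le[OF s] assms by (simp add: class_frac_def)
next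
  case False
  then show ?thesis
    using state_space_zero[OF s, of "Suc i" m] state_space_nonneg[OF s, of i m] assms(2)
    by (simp add: class_frac_def)
qed

lemma class_frac_ge_inverse:
  assumes s: "s \<in> state_space N b" and "0 < N" "1 \<le> i" "0 < class_frac s i m"
  shows "1 / real N \<le> class_frac s i m"
proof -
  have "real N * s (Suc i) m + 1 \<le> real N * s i m"
    using assms(2-4) state_space_Nats[OF s]
    by (intro Nats_less_imp_add_one_le) (simp_all add: class_frac_def)
  then show ?thesis using assms(2,3) by (simp add: class_frac_def field_simps)
qed

lemma sum_class_frac:
  assumes s: "s \<in> state_space N b"
  shows "(\<Sum>i=1..b. class_frac s i m) = s 1 m"
proof -
  have "(\<Sum>i=1..b. class_frac s i m) = s 1 m - s (Suc b) m"
    unfolding class_frac_def using sum_Suc_diff'[of 1 "Suc b" "\<lambda>i. - s i m"]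
    by (simp add: atLeastLessThanSuc_atLeastAtMost)
  then show ?thesis using state_space_zero[OF s, of "Suc b" m] by simp
qed

lemma arr_target_1_2: "arr_target N b s i m 1 2 = s 1 2"
  by (simp add: arr_target_def)

lemma dep1_target_1_2: "dep1_target N s i 1 2 = s 1 2"
  by (simp add: dep1_target_def)

lemma phase_change_target_1_2: "1 \<le> i \<Longrightarrow> phase_change_target N s i 1 2 = s 1 2 + 1 / real N"
  by (simp add: phase_change_target_def)

lemma dep2_target_1_2: "1 \<le> i \<Longrightarrow> dep2_target N s i 1 2 = s 1 2 - 1 / real N"
  by (simp add: dep2_target_def)

lemma class_frac_pos_imp_le:
  assumes s: "s \<in> state_space N b" and "1 \<le> i" "0 < class_frac s i m"
  shows "i \<le> b"
  using assms state_space_zero[OF s, of i m] state_space_zero[OF s, of "Suc i" m]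
  by (cases "i \<le> b") (auto simp: class_frac_def)

lemma class_frac_pos_imp_inverse_le:
  assumes s: "s \<in> state_space N b" and N: "0 < N" and "1 \<le> j" "j \<le> i" "m \<in> {1,2}"
    and cf: "0 < class_frac s i m"
  shows "1 / real N \<le> s j m"
  using class_frac_pos_imp_le[OF s _ cf] class_frac_ge_inverse[OF s N _ cf]
    state_space_nonneg[OF s, of "Suc i" m] state_space_antimono[OF s, of m j i] assms(3-5)
  by (auto simp: class_frac_def)

lemma dep2_target_in_state_space:
  assumes s: "s \<in> state_space N b" and N: "0 < N" and i: "1 \<le> i" and cf: "0 < class_frac s i 2"
  shows "dep2_target N s i \<in> state_space N b"
proof -
  let ?t = "dep2_target N s i"
  have ib: "i \<le> b" using class_frac_pos_imp_le[OF s i cf] .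
  have gap: "1 / real N \<le> s i 2 - s (Suc i) 2"
    using class_frac_ge_inverse[OF s N i cf] i by (simp add: class_frac_def)
  note below = class_frac_pos_imp_inverse_le[OF s N _ _ _ cf]
  have t: "?t j k = (if j = i \<and> k = 2 then s j k - 1 / real N
     else if 1 \<le> j \<and> j < i then
       (if k = 2 then s j k - 1 / real N else if k = 1 then s j k + 1 / real N else s j k)
     else s j k)" for j k
    by (simp add: dep2_target_def)
  have inv: "0 \<le> 1 / real N" by simp
  show ?thesis unfolding state_space_def
  proof (intro CollectI conjI ballI allI impI)
    fix j k assume "j < 1 \<or> b < j \<or> k \<notin> {1, 2::nat}"
    then show "?t j k = 0" using state_space_zero[OF s] i ib unfolding t by auto
  next
    fix m :: nat assume m: "m \<in> {1,2}"
    show "?t 1 m \<le> 1"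
      using state_space_first_le_1[OF s m] state_space_busy_le_1[OF s] below[of 1] i m
      unfolding t by (auto; use inv in linarith)
    show "0 \<le> ?t b m"
      using m state_space_last_nonneg[OF s m] i ib gap state_space_nonneg[OF s, of "Suc i" 2]
      unfolding t by auto
  next
    fix m :: nat and j assume m: "m \<in> {1,2}" and j: "j \<in> {1..<b}"
    have "s (Suc j) m \<le> s j m" using state_space_Suc_le[OF s m] j by auto
    then show "?t (Suc j) m \<le> ?t j m"
      using m j gap N unfolding t by (auto intro: add_increasing2)
  next
    show "?t 1 1 + ?t 1 2 \<le> 1"
      using state_space_busy_le_1[OF s] i unfolding t by (auto; use inv in linarith)
  next
    fix j and m :: nat assume "j \<in> {1..b}" and "m \<in> {1,2}"
    show "real N * ?t j m \<in> \<nat>"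
      using state_space_Nats[OF s] mult_add_inverse_Nats[OF N] mult_diff_inverse_Nats[OF N] below i
      unfolding t by auto
  qed
qed

definition phase2_count :: "nat \<Rightarrow> lbstate \<Rightarrow> nat" where
  "phase2_count N s = nat \<lfloor>real N * s 1 2\<rfloor>"

lemma of_nat_phase2_count:
  assumes "s \<in> state_space N b"
  shows "real (phase2_count N s) = real N * s 1 2"
proof -
  obtain n where "real N * s 1 2 = real n" using state_space_Nats[OF assms] Nats_cases by metis
  then show ?thesis unfolding phase2_count_def by simp
qed

lemma phase2_count_le:
  assumes s: "s \<in> state_space N b"
  shows "phase2_count N s \<le> N"
proof -
  have "real N * s 1 2 \<le> real N"
    using state_space_first_le_1[OF s, of 2] by (simp add: mult_left_le)
  then show ?thesis using of_nat_phase2_count[OF s] by linarith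
qed

lemma of_nat_phase2_count_diff:
  assumes "s \<in> state_space N b" "t \<in> state_space N b"
  shows "real (phase2_count N t) - real (phase2_count N s) = real N * (t 1 2 - s 1 2)"
  using of_nat_phase2_count[OF assms(1)] of_nat_phase2_count[OF assms(2)] by (simp add: algebra_simps)

lemma of_nat_phase2_count_dep2_target:
  assumes s: "s \<in> state_space N b" and N: "0 < N" and i: "1 \<le> i" and cf: "0 < class_frac s i 2"
  shows "real (phase2_count N (dep2_target N s i)) = real (phase2_count N s) - 1"
  using of_nat_phase2_count_diff[OF s dep2_target_in_state_space[OF s N i cf]]
    dep2_target_1_2[OF i, of N s] N by simp

lemma of_nat_phase2_count_phase_change_target:
  assumes s: "s \<in> state_space N b" and t: "phase_change_target N s i \<in> state_space N b"
    and N: "0 < N" and i: "1 \<le> i"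
  shows "real (phase2_count N (phase_change_target N s i)) = real (phase2_count N s) + 1"
  using of_nat_phase2_count_diff[OF s t] phase_change_target_1_2[OF i, of N s] N by simp

locale load_balancing_chain =
  fixes N b :: nat and lam mu1 mu2 p :: real and route :: policy
  assumes valid: "valid_policy N b route"
    and lam_nonneg: "0 \<le> lam" and mu1_pos: "0 < mu1" and mu2_pos: "0 < mu2"
    and p_nonneg: "0 \<le> p" and p_le_1: "p \<le> 1" and N_pos: "0 < N"
begin

lemma dep2_rate_le_trans_rate:
  assumes s: "s \<in> state_space N b"
  shows "(\<Sum>i=1..b. if dep2_target N s i = s' then mu2 * real N * class_frac s i 2 else 0)
         \<le> trans_rate N b lam mu1 mu2 p route s s'"
proof -
  have "0 \<le> route s i m" if "(i, m) \<in> classes b" for i m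
    using valid s that unfolding valid_policy_def by fastforce
  then have "0 \<le> (\<Sum>(i,m)\<in>classes b. if arr_target N b s i m = s' then lam * real N * route s i m else 0)"
    using lam_nonneg by (intro sum_nonneg) auto
  moreover have "(\<Sum>i=1..b. if dep2_target N s i = s' then mu2 * real N * class_frac s i 2 else 0)
     \<le> (\<Sum>i=1..b.
        (if phase_change_target N s i = s' then mu1 * p * real N * class_frac s i 1 else 0)
      + (if dep1_target N s i = s' then mu1 * (1 - p) * real N * class_frac s i 1 else 0)
      + (if dep2_target N s i = s' then mu2 * real N * class_frac s i 2 else 0))"
    using class_frac_nonneg[OF s, of _ 1] mu1_pos p_nonneg p_le_1 by (intro sum_mono) auto
  ultimately show ?thesis unfolding trans_rate_def by linarith
qed

lemma gen_nonneg:
  assumes "s \<in> state_space N b"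
  shows "0 \<le> gen N b lam mu1 mu2 p route s s'"
proof -
  have "0 \<le> (\<Sum>i=1..b. if dep2_target N s i = s' then mu2 * real N * class_frac s i 2 else 0)"
    using class_frac_nonneg[OF assms, of _ 2] mu2_pos by (intro sum_nonneg) auto
  then show ?thesis unfolding gen_def using dep2_rate_le_trans_rate[OF assms, of s'] by simp
qed

lemma trans_rate_upward:
  assumes "s' 1 2 < s 1 2"
  shows "trans_rate N b lam mu1 mu2 p route s' s
     = (\<Sum>i=1..b. if phase_change_target N s' i = s then mu1 * p * real N * class_frac s' i 1 else 0)"
proof -
  have "arr_target N b s' i m \<noteq> s" for i m using arr_target_1_2[of N b s' i m] assms by auto
  moreover have "dep1_target N s' i \<noteq> s" for i using dep1_target_1_2[of N s' i] assms by auto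
  moreover have "dep2_target N s' i \<noteq> s" if "1 \<le> i" for i
    using dep2_target_1_2[OF that, of N s'] assms N_pos by auto
  ultimately show ?thesis unfolding trans_rate_def
    by (auto intro!: sum.neutral sum.cong simp: case_prod_beta)
qed

lemma phase_change_rate_le:
  assumes s: "s \<in> state_space N b"
  shows "(\<Sum>i=1..b. mu1 * p * real N * class_frac s i 1) \<le> mu1 * p * (real N - real (phase2_count N s))"
proof -
  have "real N * (s 1 1 + s 1 2) \<le> real N"
    using state_space_busy_le_1[OF s] mult_left_mono[of _ 1 "real N"] by simp
  then have "real N * s 1 1 \<le> real N - real (phase2_count N s)"
    using of_nat_phase2_count[OF s] by (simp add: algebra_simps)
  then show ?thesis
    using sum_class_frac[OF s, of 1] mu1_pos p_nonneg
    by (simp add: sum_distrib_left[symmetric] mult.assoc mult_left_mono)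
qed

end

locale load_balancing_stationary = load_balancing_chain +
  fixes \<pi> :: "lbstate \<Rightarrow> real"
  assumes stationary: "stationary_dist N b lam mu1 mu2 p route \<pi>"
begin

lemma stationary_nonneg: "s \<in> state_space N b \<Longrightarrow> 0 \<le> \<pi> s"
  using conjunct1[OF stationary[unfolded stationary_dist_def]] by blast

lemma stationary_sum: "(\<Sum>s\<in>state_space N b. \<pi> s) = 1"
  using conjunct1[OF conjunct2[OF stationary[unfolded stationary_dist_def]]] .

lemma finite_state_space: "finite (state_space N b)"
  using stationary_sum by (metis sum.infinite zero_neq_one)

lemma stationary_balance:
  "s' \<in> state_space N b \<Longrightarrow> (\<Sum>s\<in>state_space N b. \<pi> s * gen N b lam mu1 mu2 p route s s')
     = \<pi> s' * (\<Sum>s\<in>state_space N b. gen N b lam mu1 mu2 p route s' s)"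
  using conjunct2[OF conjunct2[OF stationary[unfolded stationary_dist_def]]] by blast

lemma stationary_sum_compl:
  "(\<Sum>s | s \<in> state_space N b \<and> P s. \<pi> s) = 1 - (\<Sum>s | s \<in> state_space N b \<and> \<not> P s. \<pi> s)"
proof -
  let ?S = "state_space N b"
  have "(\<Sum>s\<in>?S. \<pi> s) = (\<Sum>s\<in>{s\<in>?S. P s} \<union> {s\<in>?S. \<not> P s}. \<pi> s)"
    by (rule arg_cong[where f = "sum \<pi>"]) auto
  also have "\<dots> = (\<Sum>s\<in>{s\<in>?S. P s}. \<pi> s) + (\<Sum>s\<in>{s\<in>?S. \<not> P s}. \<pi> s)"
    using finite_state_space by (intro sum.union_disjoint) auto
  finally show ?thesis using stationary_sum by simp
qed

lemma phase2_down_rate_ge: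
  assumes s: "s \<in> state_space N b" and K: "phase2_count N s = Suc k"
  shows "mu2 * real (Suc k)
    \<le> (\<Sum>s'\<in>{x\<in>state_space N b. phase2_count N x \<le> k}. gen N b lam mu1 mu2 p route s s')"
proof -
  let ?A = "{x\<in>state_space N b. phase2_count N x \<le> k}"
  let ?r = "\<lambda>i s'. if dep2_target N s i = s' then mu2 * real N * class_frac s i 2 else 0"
  have "mu2 * real (Suc k) = (\<Sum>i=1..b. mu2 * real N * class_frac s i 2)"
    using sum_class_frac[OF s, of 2] of_nat_phase2_count[OF s] K by (simp flip: sum_distrib_left)
  also have "\<dots> = (\<Sum>i=1..b. \<Sum>s'\<in>?A. ?r i s')"
  proof (intro sum.cong refl)
    fix i :: nat assume i: "i \<in> {1..b}"
    show "mu2 * real N * class_frac s i 2 = (\<Sum>s'\<in>?A. ?r i s')"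
    proof (cases "class_frac s i 2 = 0")
      case False
      then have cf: "0 < class_frac s i 2" using class_frac_nonneg[OF s, of i 2] i by auto
      have "dep2_target N s i \<in> ?A"
        using dep2_target_in_state_space[OF s N_pos _ cf] of_nat_phase2_count_dep2_target[OF s N_pos _ cf] i K
        by simp
      then show ?thesis using finite_state_space by (simp add: sum.delta')
    next
      case True
      show ?thesis by (simp add: True sum.neutral)
    qed
  qed
  also have "\<dots> = (\<Sum>s'\<in>?A. \<Sum>i=1..b. ?r i s')" by (rule sum.swap)
  also have "\<dots> \<le> (\<Sum>s'\<in>?A. gen N b lam mu1 mu2 p route s s')"
  proof (intro sum_mono)
    fix s' assume "s' \<in> ?A"
    then have "s' \<noteq> s" using K by auto
    then show "(\<Sum>i=1..b. ?r i s') \<le> gen N b lam mu1 mu2 p route s s'"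
      unfolding gen_def using dep2_rate_le_trans_rate[OF s, of s'] by simp
  qed
  finally show ?thesis .
qed

lemma phase2_up_rate_le:
  assumes s': "s' \<in> state_space N b" and K: "phase2_count N s' \<le> k"
  shows "(\<Sum>s\<in>state_space N b - {x\<in>state_space N b. phase2_count N x \<le> k}. gen N b lam mu1 mu2 p route s' s)
     \<le> (if phase2_count N s' = k then mu1 * p * (real N - real k) else 0)"
proof -
  let ?B = "state_space N b - {x\<in>state_space N b. phase2_count N x \<le> k}"
  let ?r = "\<lambda>i s. if phase_change_target N s' i = s then mu1 * p * real N * class_frac s' i 1 else 0"
  have "(\<Sum>s\<in>?B. gen N b lam mu1 mu2 p route s' s) = (\<Sum>s\<in>?B. \<Sum>i=1..b. ?r i s)"
  proof (intro sum.cong refl)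
    fix s assume s: "s \<in> ?B"
    then have "0 < real N * (s 1 2 - s' 1 2)"
      using K of_nat_phase2_count_diff[OF s', of s] by auto
    then have "s' 1 2 < s 1 2" by (simp add: zero_less_mult_iff)
    then show "gen N b lam mu1 mu2 p route s' s = (\<Sum>i=1..b. ?r i s)"
      unfolding gen_def using trans_rate_upward by auto
  qed
  also have "\<dots> = (\<Sum>i=1..b. \<Sum>s\<in>?B. ?r i s)" by (rule sum.swap)
  also have "\<dots> \<le> (\<Sum>i=1..b. if phase2_count N s' = k then mu1 * p * real N * class_frac s' i 1 else 0)"
  proof (intro sum_mono)
    fix i assume i: "i \<in> {1..b}"
    have "phase2_count N s' = k" if "phase_change_target N s' i \<in> ?B"
      using that of_nat_phase2_count_phase_change_target[OF s' _ N_pos, of i] i K by auto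
    moreover have "0 \<le> mu1 * p * real N * class_frac s' i 1"
      using class_frac_nonneg[OF s', of i 1] i mu1_pos p_nonneg by simp
    ultimately show "(\<Sum>s\<in>?B. ?r i s)
        \<le> (if phase2_count N s' = k then mu1 * p * real N * class_frac s' i 1 else 0)"
      using finite_state_space by (simp add: sum.delta')
  qed
  also have "\<dots> \<le> (if phase2_count N s' = k then mu1 * p * (real N - real k) else 0)"
    using phase_change_rate_le[OF s'] by auto
  finally show ?thesis .
qed

definition phase2_prob :: "nat \<Rightarrow> real" where
  "phase2_prob k = (\<Sum>s | s \<in> state_space N b \<and> phase2_count N s = k. \<pi> s)"

lemma phase2_prob_nonneg: "0 \<le> phase2_prob k"
  unfolding phase2_prob_def using stationary_nonneg by (intro sum_nonneg) auto

lemma phase2_prob_eq_0: "N < k \<Longrightarrow> phase2_prob k = 0"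
  unfolding phase2_prob_def using phase2_count_le by (intro sum.neutral) fastforce

lemma sum_phase2_prob:
  assumes "finite K"
  shows "(\<Sum>k\<in>K. phase2_prob k) = (\<Sum>s | s \<in> state_space N b \<and> phase2_count N s \<in> K. \<pi> s)"
  unfolding phase2_prob_def using assms finite_state_space
  by (subst sum.group[symmetric, of _ K "phase2_count N"]) (auto intro!: sum.cong)

lemma sum_phase2_prob_atMost: "(\<Sum>k\<le>N. phase2_prob k) = 1"
proof -
  have "{s. s \<in> state_space N b \<and> phase2_count N s \<in> {..N}} = state_space N b"
    using phase2_count_le by auto
  then show ?thesis using sum_phase2_prob[of "{..N}"] stationary_sum by simp
qed

lemma sum_weighted_phase2_prob:
  assumes "X \<subseteq> state_space N b" "{s \<in> state_space N b. phase2_count N s = j} \<subseteq> X"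
  shows "(\<Sum>s\<in>X. \<pi> s * (if phase2_count N s = j then c else 0)) = c * phase2_prob j"
proof -
  have "(\<Sum>s\<in>X. \<pi> s * (if phase2_count N s = j then c else 0))
      = (\<Sum>s\<in>{s \<in> state_space N b. phase2_count N s = j}. c * \<pi> s)"
    using assms finite_state_space finite_subset by (intro sum.mono_neutral_cong_right) auto
  then show ?thesis unfolding phase2_prob_def by (simp add: sum_distrib_left)
qed

lemma phase2_prob_recursion:
  "mu2 * real (Suc k) * phase2_prob (Suc k) \<le> mu1 * p * (real N - real k) * phase2_prob k"
proof -
  let ?S = "state_space N b"
  let ?A = "{x\<in>?S. phase2_count N x \<le> k}"
  let ?g = "gen N b lam mu1 mu2 p route"
  have "mu2 * real (Suc k) * phase2_prob (Suc k)
      = (\<Sum>s\<in>?S-?A. \<pi> s * (if phase2_count N s = Suc k then mu2 * real (Suc k) else 0))"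
    by (rule sum_weighted_phase2_prob[symmetric]) auto
  also have "\<dots> \<le> (\<Sum>s\<in>?S-?A. \<pi> s * (\<Sum>s'\<in>?A. ?g s s'))"
    using phase2_down_rate_ge gen_nonneg stationary_nonneg
    by (intro sum_mono mult_left_mono) (auto intro: sum_nonneg)
  also have "\<dots> = (\<Sum>s'\<in>?A. \<pi> s' * (\<Sum>s\<in>?S-?A. ?g s' s))"
    using finite_state_space stationary_balance by (intro balance_cut_flow) auto
  also have "\<dots> \<le> (\<Sum>s'\<in>?A. \<pi> s' * (if phase2_count N s' = k then mu1 * p * (real N - real k) else 0))"
    using phase2_up_rate_le stationary_nonneg by (intro sum_mono mult_left_mono) auto
  also have "\<dots> = mu1 * p * (real N - real k) * phase2_prob k"
    by (rule sum_weighted_phase2_prob) auto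
  finally show ?thesis .
qed

lemma phase2_tail_chernoff:
  assumes coxian: "1 / mu1 + p / mu2 = 1" and \<theta>: "0 \<le> \<theta>"
  shows "(\<Sum>s | s \<in> state_space N b \<and> x < s 1 2. \<pi> s)
    \<le> exp (- \<theta> * (real N * x)) * (1 + p / mu2 * (exp \<theta> - 1)) ^ N"
proof -
  have "{s. s \<in> state_space N b \<and> x < s 1 2}
      = {s. s \<in> state_space N b \<and> phase2_count N s \<in> {k. k \<le> N \<and> real N * x < real k}}"
    using of_nat_phase2_count phase2_count_le N_pos by auto
  then have "(\<Sum>s | s \<in> state_space N b \<and> x < s 1 2. \<pi> s)
      = (\<Sum>k | k \<le> N \<and> real N * x < real k. phase2_prob k)"
    by (simp add: sum_phase2_prob)
  also have "\<dots> \<le> exp (- \<theta> * (real N * x)) * (1 + mu1 * p / (mu1 * p + mu2) * (exp \<theta> - 1)) ^ N"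
    using phase2_prob_recursion phase2_prob_eq_0 phase2_prob_nonneg sum_phase2_prob_atMost
      mu1_pos mu2_pos p_nonneg \<theta>
    by (intro tail_chernoff) auto
  also have "mu1 * p + mu2 = mu1 * mu2"
    using coxian mu1_pos mu2_pos by (simp add: field_simps)
  also have "mu1 * p / (mu1 * mu2) = p / mu2"
    using mu1_pos by simp
  finally show ?thesis .
qed

end

theorem lemma6:
  fixes N b :: nat and \<alpha> mu1 mu2 p :: real and route :: policy and \<pi> :: "lbstate \<Rightarrow> real"
  defines "lam \<equiv> 1 - real N powr (- \<alpha>)"
  assumes "1 \<le> N" and "1 \<le> b"
    and "0 < \<alpha>" and "\<alpha> < 1/2"
    and "0 < mu1" and "0 < mu2" and "0 \<le> p" and "p < 1"
    and "1 / mu1 + p / mu2 = 1"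
    and "valid_policy N b route"
    and "irreducible_chain N b lam mu1 mu2 p route"
    and "in_Pi N b lam mu1 mu2 p route"
    and "stationary_dist N b lam mu1 mu2 p route \<pi>"
  shows "(\<Sum>s\<in>{s\<in>state_space N b. s 1 2 \<le> p / mu2 + ln (real N) / (2 * sqrt (real N))}. \<pi> s)
           \<ge> 1 - exp (- (mu1 * mu2 * (ln (real N))\<^sup>2) / (40 * max mu1 mu2))"
proof -
  have "real N powr (- \<alpha>) \<le> 1"
    using ge_one_powr_ge_zero[of "real N" \<alpha>] assms(2,4) by (simp add: powr_minus inverse_le_1_iff)
  then interpret load_balancing_stationary N b lam mu1 mu2 p route \<pi>
    using assms by unfold_locales auto
  define L where "L = ln (real N)"
  define \<theta> where "\<theta> = L / (4 * sqrt (real N))"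
  define x where "x = p / mu2 + L / (2 * sqrt (real N))"
  have "0 < 1 / mu1" using assms(6) by simp
  then have q: "0 \<le> p / mu2" "p / mu2 \<le> 1" using assms(7,8,10) by (simp, linarith)
  have "(\<Sum>s | s \<in> state_space N b \<and> x < s 1 2. \<pi> s)
      \<le> exp (- \<theta> * (real N * x)) * (1 + p / mu2 * (exp \<theta> - 1)) ^ N"
    using assms(10) assms(2) by (intro phase2_tail_chernoff) (simp_all add: \<theta>_def L_def)
  also have "\<dots> \<le> exp (- (L\<^sup>2 / 16))"
    unfolding x_def \<theta>_def L_def using chernoff_exponent_le[OF assms(2) q] by simp
  also have "\<dots> \<le> exp (- (mu1 * mu2 * L\<^sup>2) / (40 * max mu1 mu2))"
    using coxian_rate_ratio_le[OF assms(6,7,9,10), of "L\<^sup>2"] by simp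
  finally show ?thesis
    using stationary_sum_compl[of "\<lambda>s. s 1 2 \<le> x"] unfolding x_def L_def by (simp add: not_le)
qed

end
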